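(* Let $(X,T)$ be a minimal topological dynamical system. If the factor map $\pi: X\to X_D$ onto its maximal distal factor is proximal, then $(X,T)$ is not strongly $\mathcal{F}_t$-sensitive.
   Context: A topological dynamical system: compact metric space $(X,d)$ with continuous surjection $T$; minimal means every orbit is dense. A pair is proximal if $\inf_n d(T^nx,T^ny)=0$, otherwise distal; a system is distal if all pairs of distinct points are distal; $X_D$ is the distal factor of which every distal factor of $(X,T)$ is a factor. $\pi$ is proximal if every pair in a common fiber is proximal. $(X,T)$ is strongly $\mathcal{F}_t$-sensitive if there is $\delta>0$ such that for each nonempty open $U$ there are $x,y\in U$ with $\{n\in\mathbb{Z}_+:d(T^nx,T^ny)>\delta\}$ thick (containing arbitrarily long blocks of consecutive integers). *)

theory Defs
  imports "HOL-Analysis.Analysis"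
begin

definition tds :: "'a::metric_space set \<Rightarrow> ('a \<Rightarrow> 'a) \<Rightarrow> bool" where
  "tds X T \<longleftrightarrow> compact X \<and> X \<noteq> {} \<and> continuous_on X T \<and> T ` X = X"

definition minimal :: "'a::metric_space set \<Rightarrow> ('a \<Rightarrow> 'a) \<Rightarrow> bool" where
  "minimal X T \<longleftrightarrow> (\<forall>x\<in>X. X \<subseteq> closure {(T ^^ n) x | n. True})"

definition proximal_pair :: "('a::metric_space \<Rightarrow> 'a) \<Rightarrow> 'a \<Rightarrow> 'a \<Rightarrow> bool" where
  "proximal_pair T x y \<longleftrightarrow> (INF n. dist ((T ^^ n) x) ((T ^^ n) y)) = 0"

definition distal :: "'a::metric_space set \<Rightarrow> ('a \<Rightarrow> 'a) \<Rightarrow> bool" where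
  "distal X T \<longleftrightarrow> (\<forall>x\<in>X. \<forall>y\<in>X. x \<noteq> y \<longrightarrow> \<not> proximal_pair T x y)"

definition factor_map ::
  "'a::metric_space set \<Rightarrow> ('a \<Rightarrow> 'a) \<Rightarrow> 'b::metric_space set \<Rightarrow> ('b \<Rightarrow> 'b) \<Rightarrow> ('a \<Rightarrow> 'b) \<Rightarrow> bool" where
  "factor_map X T Y S p \<longleftrightarrow> tds X T \<and> tds Y S \<and> continuous_on X p \<and> p ` X = Y \<and>
     (\<forall>x\<in>X. p (T x) = S (p x))"

definition max_distal_factor ::
  "'a::metric_space set \<Rightarrow> ('a \<Rightarrow> 'a) \<Rightarrow> 'b::metric_space set \<Rightarrow> ('b \<Rightarrow> 'b) \<Rightarrow> ('a \<Rightarrow> 'b) \<Rightarrow> bool" where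
  "max_distal_factor X T Y S p \<longleftrightarrow> factor_map X T Y S p \<and> distal Y S \<and>
     (\<forall>(Z::'b set) R rho. factor_map X T Z R rho \<and> distal Z R \<longrightarrow>
        (\<exists>phi. factor_map Y S Z R phi \<and> (\<forall>x\<in>X. rho x = phi (p x))))"

definition proximal_factor :: "'a::metric_space set \<Rightarrow> ('a \<Rightarrow> 'a) \<Rightarrow> ('a \<Rightarrow> 'b) \<Rightarrow> bool" where
  "proximal_factor X T p \<longleftrightarrow> (\<forall>x\<in>X. \<forall>y\<in>X. p x = p y \<longrightarrow> proximal_pair T x y)"

definition thick :: "nat set \<Rightarrow> bool" where
  "thick A \<longleftrightarrow> (\<forall>L. \<exists>m. {m..<m+L} \<subseteq> A)"

definition strongly_Ft_sensitive :: "'a::metric_space set \<Rightarrow> ('a \<Rightarrow> 'a) \<Rightarrow> bool" where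
  "strongly_Ft_sensitive X T \<longleftrightarrow> (\<exists>\<delta>>0. \<forall>U. openin (top_of_set X) U \<and> U \<noteq> {} \<longrightarrow>
     (\<exists>x\<in>U. \<exists>y\<in>U. thick {n. dist ((T ^^ n) x) ((T ^^ n) y) > \<delta>}))"

end

theory Submission
  imports Defs
begin

text \<open>Suppose (X, T) were strongly F_t-sensitive with constant d. Points x, y near any z \<in> X are
  d-apart along arbitrarily long blocks of times, so a limit of the pairs at the block starts lies in
  the orbit closure of (x, y) and stays d-apart forever. The images of such forever separated pairs
  form a closed invariant subset Q of Y \<times> Y. As Y \<times> Y is distal, its orbit closures are minimal
  (via idempotents in the Ellis semigroup), so (p x, p y) lies in Q already.\<close>

definition orbit :: "('a \<Rightarrow> 'a) \<Rightarrow> 'a \<Rightarrow> 'a set" where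
  "orbit T x = range (\<lambda>n. (T ^^ n) x)"

lemma funpow_in: "T ` X \<subseteq> X \<Longrightarrow> x \<in> X \<Longrightarrow> (T ^^ n) x \<in> X"
  by (induction n) auto

lemma orbit_subset: "T ` X \<subseteq> X \<Longrightarrow> x \<in> X \<Longrightarrow> orbit T x \<subseteq> X"
  by (auto simp: orbit_def funpow_in)

lemma continuous_on_funpow:
  assumes "continuous_on X T" "T ` X \<subseteq> X"
  shows "continuous_on X (T ^^ n)"
proof (induction n)
  case (Suc n)
  have "(T ^^ n) ` X \<subseteq> X"
    using assms(2) by (auto simp: funpow_in)
  then have "continuous_on X (T \<circ> (T ^^ n))"
    using Suc continuous_on_subset[OF assms(1)] by (intro continuous_on_compose) auto
  then show ?case by simp
qed (simp add: continuous_on_id)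

lemma funpow_map_prod:
  fixes f :: "'a \<Rightarrow> 'a" and g :: "'b \<Rightarrow> 'b"
  shows "map_prod f g ^^ n = map_prod (f ^^ n) (g ^^ n)"
  by (induction n) (auto simp: fun_eq_iff)

lemma factor_funpow:
  assumes "T ` X \<subseteq> X" "\<forall>x\<in>X. p (T x) = S (p x)" "x \<in> X"
  shows "p ((T ^^ n) x) = (S ^^ n) (p x)"
  using assms by (induction n) (auto simp: funpow_in)

lemma continuous_on_map_prod:
  assumes "continuous_on X f" "continuous_on Y g"
  shows "continuous_on (X \<times> Y) (map_prod f g)"
proof -
  have "continuous_on (X \<times> Y) (\<lambda>w. (f (fst w), g (snd w)))"
    using assms by (intro continuous_on_Pair continuous_on_compose2[OF _ continuous_on_fst]
        continuous_on_compose2[OF _ continuous_on_snd]) auto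
  then show ?thesis by (simp add: map_prod_def case_prod_beta')
qed

lemma tds_map_prod: "tds X T \<Longrightarrow> tds (X \<times> X) (map_prod T T)"
  by (simp add: tds_def compact_Times continuous_on_map_prod map_prod_surj_on)

lemma proximal_pair_iff:
  "proximal_pair T x y \<longleftrightarrow> (\<forall>e>0. \<exists>n. dist ((T ^^ n) x) ((T ^^ n) y) < e)"
proof -
  let ?f = "\<lambda>n. dist ((T ^^ n) x) ((T ^^ n) y)"
  have bdd: "bdd_below (range ?f)" by (rule bdd_belowI[of _ 0]) auto
  have zero_iff: "r = 0 \<longleftrightarrow> (\<forall>e>0. r < e)" if "0 \<le> r" for r :: real
  proof
    assume "\<forall>e>0. r < e"
    then have "\<not> 0 < r" using less_irrefl by blast
    with that show "r = 0" by simp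
  qed simp
  have "(INF n. ?f n) = 0 \<longleftrightarrow> (\<forall>e>0. (INF n. ?f n) < e)"
    by (rule zero_iff, rule cINF_greatest) auto
  also have "\<dots> \<longleftrightarrow> (\<forall>e>0. \<exists>n. ?f n < e)"
    by (simp add: cINF_less_iff[OF _ bdd])
  finally show ?thesis unfolding proximal_pair_def .
qed

lemma proximal_pair_map_prod:
  assumes "proximal_pair (map_prod T T) (a, b) (c, d)"
  shows "proximal_pair T a c \<and> proximal_pair T b d"
  unfolding proximal_pair_iff
proof (intro conjI allI impI)
  fix e :: real assume "e > 0"
  then obtain n where n: "dist ((T ^^ n) a, (T ^^ n) b) ((T ^^ n) c, (T ^^ n) d) < e"
    using assms unfolding proximal_pair_iff funpow_map_prod by auto
  show "\<exists>n. dist ((T ^^ n) a) ((T ^^ n) c) < e"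
    using le_less_trans[OF dist_fst_le n] by auto
  show "\<exists>n. dist ((T ^^ n) b) ((T ^^ n) d) < e"
    using le_less_trans[OF dist_snd_le n] by auto
qed

lemma distal_map_prod:
  assumes "distal X T"
  shows "distal (X \<times> X) (map_prod T T)"
  unfolding distal_def
proof (intro ballI impI notI)
  fix w w' assume "w \<in> X \<times> X" "w' \<in> X \<times> X" "w \<noteq> w'"
    and prox: "proximal_pair (map_prod T T) w w'"
  then obtain a b c d where w: "w = (a, b)" "w' = (c, d)"
    and "a \<in> X" "b \<in> X" "c \<in> X" "d \<in> X" "a \<noteq> c \<or> b \<noteq> d"
    by blast
  moreover have "proximal_pair T a c" "proximal_pair T b d"
    using proximal_pair_map_prod prox unfolding w by blast+
  ultimately show False
    using assms unfolding distal_def by blast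
qed

lemma compact_imp_closed_fun:
  fixes A :: "('a \<Rightarrow> 'b::t2_space) set"
  assumes "compact A"
  shows "closed A"
proof -
  have "Hausdorff_space (euclidean :: 'b topology)"
    unfolding Hausdorff_space_def disjnt_def using hausdorff by auto
  then have Hausdorff: "Hausdorff_space (product_topology (\<lambda>_::'a. (euclidean::'b topology)) UNIV)"
    by (simp add: Hausdorff_space_product_topology)
  have "compactin euclidean A"
    using assms by simp
  then have "closedin euclidean A"
    using compactin_imp_closedin[OF Hausdorff] by (simp add: euclidean_product_topology)
  then show ?thesis by simp
qed

lemma continuous_on_apply: "continuous_on A (\<lambda>f. f i :: 'b::topological_space)"
  by (rule continuous_on_subset[OF continuous_on_product_coordinates subset_UNIV])

lemma continuous_on_comp_right: "continuous_on UNIV (\<lambda>f :: 'b \<Rightarrow> 'c::topological_space. f \<circ> q)"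
  by (intro continuous_on_coordinatewise_then_product) (simp add: o_def)

lemma closed_comp_fixes: "closed {f :: 'b \<Rightarrow> 'b::t2_space. f \<circ> p = p}"
proof -
  have "{f :: 'b \<Rightarrow> 'b. f \<circ> p = p} = (\<Inter>y. {f. f (p y) = p y})"
    by (auto simp: fun_eq_iff)
  moreover have "closed {f :: 'b \<Rightarrow> 'b. f (p y) = p y}" for y
    by (intro closed_Collect_eq) (auto intro: continuous_on_const)
  ultimately show ?thesis by auto
qed

definition compact_comp_semigroup :: "('b::topological_space \<Rightarrow> 'b) set \<Rightarrow> bool" where
  "compact_comp_semigroup A \<longleftrightarrow> compact A \<and> A \<noteq> {} \<and> (\<forall>f\<in>A. \<forall>g\<in>A. f \<circ> g \<in> A)"

lemma compact_comp_semigroup_minimal: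
  fixes A :: "('b::t2_space \<Rightarrow> 'b) set"
  assumes "compact_comp_semigroup A"
  shows "\<exists>B\<subseteq>A. compact_comp_semigroup B \<and> (\<forall>C\<subseteq>B. compact_comp_semigroup C \<longrightarrow> C = B)"
proof -
  define \<F> where "\<F> = {B. B \<subseteq> A \<and> compact_comp_semigroup B}"
  have "\<exists>B\<in>\<F>. \<forall>C\<in>\<F>. C \<subseteq> B \<longrightarrow> C = B"
  proof (rule predicate_Zorn)
    show "partial_order_on \<F> (relation_of (\<lambda>B C. C \<subseteq> B) \<F>)"
      by (intro partial_order_on_relation_ofI) auto
  next
    fix \<C> assume "\<C> \<in> Chains (relation_of (\<lambda>B C. C \<subseteq> B) \<F>)"
    then have \<C>: "\<C> \<subseteq> \<F>" "\<forall>B\<in>\<C>. \<forall>C\<in>\<C>. B \<subseteq> C \<or> C \<subseteq> B"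
      by (auto simp: Chains_def relation_of_def)
    show "\<exists>D\<in>\<F>. \<forall>B\<in>\<C>. D \<subseteq> B"
    proof (cases "\<C> = {}")
      case True
      then show ?thesis using assms by (auto simp: \<F>_def)
    next
      case False
      then obtain B0 where B0: "B0 \<in> \<C>" by blast
      have compact: "compact B" and closed: "closed B" if "B \<in> \<C>" for B
        using that \<C>(1) by (auto simp: \<F>_def compact_comp_semigroup_def intro: compact_imp_closed_fun)
      have "B0 \<inter> \<Inter>\<C> \<noteq> {}"
      proof (rule compact_imp_fip[OF compact[OF B0] closed])
        fix \<C>' assume "finite \<C>'" "\<C>' \<subseteq> \<C>"
        then have "\<Inter>(insert B0 \<C>') \<in> insert B0 \<C>'"
          using B0 \<C>(2) by (intro Inter_in_chain) (auto simp: subset_chain_def)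
        then show "B0 \<inter> \<Inter>\<C>' \<noteq> {}"
          using B0 \<open>\<C>' \<subseteq> \<C>\<close> \<C>(1) by (auto simp: \<F>_def compact_comp_semigroup_def)
      qed
      moreover have "compact (\<Inter>\<C>)"
        using B0 compact closed by (metis Inter_lower closed_Inter compact_Int_closed inf.absorb2)
      moreover have "\<Inter>\<C> \<subseteq> A"
        using B0 \<C>(1) by (auto simp: \<F>_def)
      moreover have "\<forall>f\<in>\<Inter>\<C>. \<forall>g\<in>\<Inter>\<C>. f \<circ> g \<in> \<Inter>\<C>"
        using \<C>(1) by (auto simp: \<F>_def compact_comp_semigroup_def)
      ultimately show ?thesis
        by (intro bexI[of _ "\<Inter>\<C>"]) (auto simp: \<F>_def compact_comp_semigroup_def)
    qed
  qed
  then show ?thesis unfolding \<F>_def by (simp add: Ball_def) (meson order_trans)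
qed

text \<open>Ellis--Numakura. For u in a minimal compact subsemigroup B, minimality forces B \<circ> u = B and
  then B = {f \<in> B. f \<circ> u = u}.\<close>
lemma compact_comp_semigroup_idempotent:
  fixes A :: "('b::t2_space \<Rightarrow> 'b) set"
  assumes "compact_comp_semigroup A"
  shows "\<exists>u\<in>A. u \<circ> u = u"
proof -
  obtain B where "B \<subseteq> A" and B: "compact_comp_semigroup B"
    and minimal: "\<And>C. C \<subseteq> B \<Longrightarrow> compact_comp_semigroup C \<Longrightarrow> C = B"
    using compact_comp_semigroup_minimal[OF assms] by blast
  then obtain u where u: "u \<in> B" by (auto simp: compact_comp_semigroup_def)
  have "(\<lambda>f. f \<circ> u) ` B \<subseteq> B"
    using B u by (auto simp: compact_comp_semigroup_def)
  moreover have "compact_comp_semigroup ((\<lambda>f. f \<circ> u) ` B)"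
    unfolding compact_comp_semigroup_def
  proof (intro conjI ballI)
    show "compact ((\<lambda>f. f \<circ> u) ` B)"
      using B by (intro compact_continuous_image continuous_on_subset[OF continuous_on_comp_right])
        (auto simp: compact_comp_semigroup_def)
    show "(\<lambda>f. f \<circ> u) ` B \<noteq> {}" using u by blast
    fix f g assume "f \<in> (\<lambda>f. f \<circ> u) ` B" "g \<in> (\<lambda>f. f \<circ> u) ` B"
    then obtain f' g' where "f' \<in> B" "g' \<in> B" "f = f' \<circ> u" "g = g' \<circ> u" by blast
    then show "f \<circ> g \<in> (\<lambda>f. f \<circ> u) ` B"
      using B u by (intro image_eqI[of _ _ "f' \<circ> (u \<circ> g')"])
        (auto simp: compact_comp_semigroup_def o_assoc)
  qed
  ultimately have "(\<lambda>f. f \<circ> u) ` B = B" using minimal by blast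
  then obtain v where "v \<in> B" "v \<circ> u = u"
    using u by (metis imageE)
  define C where "C = B \<inter> {f. f \<circ> u = u}"
  have semigroup_C: "compact_comp_semigroup C"
    unfolding compact_comp_semigroup_def
  proof (intro conjI ballI)
    show "compact C"
      unfolding C_def using B closed_comp_fixes
      by (intro compact_Int_closed) (auto simp: compact_comp_semigroup_def)
    show "C \<noteq> {}"
      using \<open>v \<in> B\<close> \<open>v \<circ> u = u\<close> by (auto simp: C_def)
    fix f g assume "f \<in> C" "g \<in> C"
    then show "f \<circ> g \<in> C"
      using B by (auto simp: C_def compact_comp_semigroup_def o_assoc[symmetric])
  qed
  have "C \<subseteq> B" by (simp add: C_def)
  then have "C = B" using semigroup_C by (rule minimal)
  then have "u \<circ> u = u" using u by (auto simp: C_def)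
  then show ?thesis using u \<open>B \<subseteq> A\<close> by blast
qed

locale enveloping_semigroup =
  fixes Y :: "'b::metric_space set" and S :: "'b \<Rightarrow> 'b"
  assumes tds: "tds Y S"
begin

text \<open>The iterates of S are precomposed with a retraction onto Y, so that they become points of
  the compact space of maps UNIV \<Rightarrow> Y with the product topology.\<close>
definition retract :: "'b \<Rightarrow> 'b" where
  "retract y = (if y \<in> Y then y else (SOME y. y \<in> Y))"

definition ellis :: "('b \<Rightarrow> 'b) set" where
  "ellis = closure (range (\<lambda>n. (S ^^ n) \<circ> retract))"

lemma maps_into: "S ` Y \<subseteq> Y"
  using tds by (simp add: tds_def)

lemma continuous: "continuous_on Y S"
  using tds by (simp add: tds_def)

lemma retract_in: "retract y \<in> Y"
  using tds by (auto simp: retract_def tds_def some_in_eq)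

lemma retract_id: "y \<in> Y \<Longrightarrow> retract y = y"
  by (simp add: retract_def)

lemma compact_maps_into: "compact {f. \<forall>y. f y \<in> Y}"
proof -
  have eq: "{f. \<forall>y. f y \<in> Y} = PiE UNIV (\<lambda>_. Y)"
    by (auto simp: PiE_def Pi_def)
  have "compactin (product_topology (\<lambda>_. euclidean) UNIV) (PiE UNIV (\<lambda>_. Y))"
    using tds by (simp add: tds_def compactin_PiE)
  then show ?thesis
    unfolding eq euclidean_product_topology by simp
qed

lemma ellis_subset: "ellis \<subseteq> {f. \<forall>y. f y \<in> Y}"
  unfolding ellis_def using funpow_in[OF maps_into retract_in]
  by (intro closure_minimal compact_imp_closed_fun compact_maps_into) auto

lemma compact_ellis: "compact ellis"
  using compact_maps_into ellis_subset
  by (metis closed_closure compact_Int_closed ellis_def inf.absorb2)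

lemma iterate_in_ellis: "(S ^^ n) \<circ> retract \<in> ellis"
  unfolding ellis_def by (rule closure_subset[THEN subsetD]) blast

lemma continuous_on_comp_funpow: "continuous_on {f. \<forall>y. f y \<in> Y} (\<lambda>f. (S ^^ n) \<circ> f)"
proof (intro continuous_on_coordinatewise_then_product)
  fix i
  have "continuous_on {f. \<forall>y. f y \<in> Y} (\<lambda>f. (S ^^ n) (f i))"
    by (rule continuous_on_compose2[OF continuous_on_funpow[OF continuous maps_into]
          continuous_on_apply]) auto
  then show "continuous_on {f. \<forall>y. f y \<in> Y} (\<lambda>f. ((S ^^ n) \<circ> f) i)"
    by (simp add: o_def)
qed

lemma funpow_comp_ellis:
  assumes "q \<in> ellis"
  shows "(S ^^ n) \<circ> q \<in> ellis"
proof -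
  have "(\<lambda>f. (S ^^ n) \<circ> f) ` closure (range (\<lambda>m. (S ^^ m) \<circ> retract)) \<subseteq> ellis"
  proof (rule image_closure_subset)
    show "continuous_on (closure (range (\<lambda>m. (S ^^ m) \<circ> retract))) (\<lambda>f. (S ^^ n) \<circ> f)"
      using continuous_on_subset[OF continuous_on_comp_funpow ellis_subset] by (simp add: ellis_def)
    have "(S ^^ n) \<circ> ((S ^^ m) \<circ> retract) = (S ^^ (n + m)) \<circ> retract" for m
      by (simp add: funpow_add o_assoc)
    then show "(\<lambda>f. (S ^^ n) \<circ> f) ` range (\<lambda>m. (S ^^ m) \<circ> retract) \<subseteq> ellis"
      using iterate_in_ellis by auto
  qed (simp add: ellis_def)
  then show ?thesis
    using assms by (auto simp: ellis_def)
qed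

lemma ellis_comp:
  assumes "p \<in> ellis" "q \<in> ellis"
  shows "p \<circ> q \<in> ellis"
proof -
  have "(\<lambda>f. f \<circ> q) ` closure (range (\<lambda>m. (S ^^ m) \<circ> retract)) \<subseteq> ellis"
  proof (rule image_closure_subset)
    show "continuous_on (closure (range (\<lambda>m. (S ^^ m) \<circ> retract))) (\<lambda>f. f \<circ> q)"
      by (rule continuous_on_subset[OF continuous_on_comp_right subset_UNIV])
    have "retract \<circ> q = q"
      using assms(2) ellis_subset by (auto simp: fun_eq_iff retract_id)
    then have "((S ^^ m) \<circ> retract) \<circ> q = (S ^^ m) \<circ> q" for m
      by (simp add: o_assoc[symmetric])
    then show "(\<lambda>f. f \<circ> q) ` range (\<lambda>m. (S ^^ m) \<circ> retract) \<subseteq> ellis"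
      using funpow_comp_ellis[OF assms(2)] by auto
  qed (simp add: ellis_def)
  then show ?thesis
    using assms(1) by (auto simp: ellis_def)
qed

lemma orbit_closure_eq_ellis:
  assumes "a \<in> Y"
  shows "closure (orbit S a) = (\<lambda>f. f a) ` ellis"
proof
  have range_eq: "(\<lambda>f. f a) ` range (\<lambda>n. (S ^^ n) \<circ> retract) = orbit S a"
    using assms by (simp add: image_image retract_id orbit_def)
  have "compact ((\<lambda>f. f a) ` ellis)"
    by (intro compact_continuous_image compact_ellis continuous_on_apply)
  then show "closure (orbit S a) \<subseteq> (\<lambda>f. f a) ` ellis"
    unfolding range_eq[symmetric] ellis_def
    by (intro closure_minimal compact_imp_closed image_mono closure_subset)
  show "(\<lambda>f. f a) ` ellis \<subseteq> closure (orbit S a)"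
    unfolding ellis_def range_eq[symmetric]
    by (intro image_closure_subset continuous_on_apply closed_closure closure_subset)
qed

lemma idempotent_proximal:
  assumes u: "u \<in> ellis" "u \<circ> u = u" and a: "a \<in> Y"
  shows "proximal_pair S a (u a)"
  unfolding proximal_pair_iff
proof (intro allI impI)
  fix e :: real assume "e > 0"
  define b where "b = u a"
  have "b \<in> Y" using u ellis_subset by (auto simp: b_def)
  have "u b = b" using u(2) by (metis b_def comp_apply)
  define N where "N = (\<lambda>f. f a) -` ball b (e/2) \<inter> (\<lambda>f. f b) -` ball b (e/2)"
  have "open N" unfolding N_def
    by (intro open_Int open_vimage continuous_on_product_coordinates open_ball)
  moreover have "u \<in> N"
    using \<open>e > 0\<close> \<open>u b = b\<close> by (simp add: N_def b_def)
  ultimately obtain n where "(S ^^ n) \<circ> retract \<in> N"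
    using u(1) unfolding ellis_def closure_iff_nhds_not_empty by blast
  then have "dist ((S ^^ n) a) b < e/2" "dist ((S ^^ n) b) b < e/2"
    using a \<open>b \<in> Y\<close> by (auto simp: N_def retract_id dist_commute)
  then have "dist ((S ^^ n) a) ((S ^^ n) b) < e"
    using dist_triangle_half_l by blast
  then show "\<exists>n. dist ((S ^^ n) a) ((S ^^ n) (u a)) < e"
    unfolding b_def by blast
qed

lemma distal_idempotent_id:
  assumes "distal Y S" "u \<in> ellis" "u \<circ> u = u" "a \<in> Y"
  shows "u a = a"
proof (rule ccontr)
  assume "u a \<noteq> a"
  moreover have "u a \<in> Y"
    using assms(2) ellis_subset by blast
  ultimately have "\<not> proximal_pair S a (u a)"
    using assms(1,4) unfolding distal_def by auto
  then show False
    using idempotent_proximal[OF assms(2-4)] by contradiction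
qed

text \<open>In a distal system every orbit closure is minimal. Given c = q a with q in the enveloping
  semigroup, an idempotent u = r \<circ> q of the left ideal generated by q fixes a, so r c = a.\<close>
lemma distal_orbit_closure_sym:
  assumes "distal Y S" "a \<in> Y" "c \<in> closure (orbit S a)"
  shows "a \<in> closure (orbit S c)"
proof -
  obtain q where q: "q \<in> ellis" "c = q a"
    using assms(2,3) orbit_closure_eq_ellis by blast
  have "c \<in> Y" using q ellis_subset by blast
  have "compact_comp_semigroup ((\<lambda>r. r \<circ> q) ` ellis)"
    unfolding compact_comp_semigroup_def
  proof (intro conjI ballI)
    show "compact ((\<lambda>r. r \<circ> q) ` ellis)"
      by (intro compact_continuous_image compact_ellis
          continuous_on_subset[OF continuous_on_comp_right subset_UNIV])
    show "(\<lambda>r. r \<circ> q) ` ellis \<noteq> {}" using q by blast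
    fix f g assume "f \<in> (\<lambda>r. r \<circ> q) ` ellis" "g \<in> (\<lambda>r. r \<circ> q) ` ellis"
    then obtain r r' where "r \<in> ellis" "r' \<in> ellis" "f = r \<circ> q" "g = r' \<circ> q" by blast
    then show "f \<circ> g \<in> (\<lambda>r. r \<circ> q) ` ellis"
      using q ellis_comp by (intro image_eqI[of _ _ "r \<circ> q \<circ> r'"]) (auto simp: o_assoc)
  qed
  then obtain r where r: "r \<in> ellis" "(r \<circ> q) \<circ> (r \<circ> q) = r \<circ> q"
    using compact_comp_semigroup_idempotent by blast
  then have "r c = a"
    using distal_idempotent_id[OF assms(1) ellis_comp[OF r(1) q(1)] r(2) assms(2)] q(2) by simp
  then show ?thesis
    using orbit_closure_eq_ellis[OF \<open>c \<in> Y\<close>] r(1) by blast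
qed

end

definition separated_pairs :: "'a::metric_space set \<Rightarrow> ('a \<Rightarrow> 'a) \<Rightarrow> real \<Rightarrow> ('a \<times> 'a) set" where
  "separated_pairs X T d = {(x, y) \<in> X \<times> X. \<forall>n. d \<le> dist ((T ^^ n) x) ((T ^^ n) y)}"

lemma continuous_on_dist_funpow:
  assumes "continuous_on X T" "T ` X \<subseteq> X"
  shows "continuous_on (X \<times> X) (\<lambda>w. dist ((T ^^ n) (fst w)) ((T ^^ n) (snd w)))"
  using continuous_on_funpow[OF assms]
  by (intro continuous_on_dist continuous_on_compose2[OF _ continuous_on_fst]
      continuous_on_compose2[OF _ continuous_on_snd]) auto

lemma compact_separated_pairs:
  assumes "compact X" "continuous_on X T" "T ` X \<subseteq> X"
  shows "compact (separated_pairs X T d)"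
proof -
  let ?dist = "\<lambda>n w. dist ((T ^^ n) (fst w)) ((T ^^ n) (snd w))"
  have eq: "separated_pairs X T d = (X \<times> X) \<inter> (\<Inter>n. (X \<times> X) \<inter> ?dist n -` {d..})"
    by (auto simp: separated_pairs_def)
  have "closed ((X \<times> X) \<inter> ?dist n -` {d..})" for n
    using assms by (intro continuous_closed_preimage continuous_on_dist_funpow closed_Times
        closed_atLeast) (auto intro: compact_imp_closed)
  then have "closed (\<Inter>n. (X \<times> X) \<inter> ?dist n -` {d..})"
    by (intro closed_INT) blast
  with assms(1) have "compact ((X \<times> X) \<inter> (\<Inter>n. (X \<times> X) \<inter> ?dist n -` {d..}))"
    by (intro compact_Int_closed compact_Times)
  then show ?thesis by (simp only: eq)
qed

lemma separated_pairs_invariant: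
  assumes "T ` X \<subseteq> X" "(x, y) \<in> separated_pairs X T d"
  shows "(T x, T y) \<in> separated_pairs X T d"
proof -
  have "x \<in> X" "y \<in> X" and separated: "\<And>n. d \<le> dist ((T ^^ n) x) ((T ^^ n) y)"
    using assms(2) by (auto simp: separated_pairs_def)
  have "d \<le> dist ((T ^^ n) (T x)) ((T ^^ n) (T y))" for n
    using separated[of "Suc n"] by (simp add: funpow_Suc_right del: funpow.simps)
  then show ?thesis
    using assms(1) \<open>x \<in> X\<close> \<open>y \<in> X\<close> by (auto simp: separated_pairs_def)
qed

text \<open>Along the starting points of longer and longer separation blocks, a convergent
  subsequence of the pair orbit converges to a pair that stays separated for all times.\<close>
lemma thick_separation_orbit_closure:
  assumes X: "compact X" "continuous_on X T" "T ` X \<subseteq> X" and "x \<in> X" "y \<in> X"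
    and thick: "thick {n. d < dist ((T ^^ n) x) ((T ^^ n) y)}"
  shows "\<exists>w \<in> separated_pairs X T d. w \<in> closure (orbit (map_prod T T) (x, y))"
proof -
  obtain m where block: "\<And>L. {m L..<m L + L} \<subseteq> {n. d < dist ((T ^^ n) x) ((T ^^ n) y)}"
    using thick unfolding thick_def by metis
  define K where "K = closure (orbit (map_prod T T) (x, y))"
  have "orbit (map_prod T T) (x, y) \<subseteq> X \<times> X"
    using X(3) \<open>x \<in> X\<close> \<open>y \<in> X\<close> by (intro orbit_subset) auto
  then have "K \<subseteq> X \<times> X"
    unfolding K_def using X(1) by (intro closure_minimal closed_Times compact_imp_closed)
  moreover have "compact ((X \<times> X) \<inter> K)"
    using X(1) by (intro compact_Int_closed compact_Times) (simp_all add: K_def)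
  ultimately have "compact K"
    by (simp add: Int_absorb1)
  define w where "w L = ((T ^^ m L) x, (T ^^ m L) y)" for L
  have "w L \<in> K" for L
    unfolding K_def w_def orbit_def funpow_map_prod by (intro closure_subset[THEN subsetD]) auto
  then obtain l r where "l \<in> K" "strict_mono r" and lim: "(w \<circ> r) \<longlonglongrightarrow> l"
    using seq_compactE[OF compact_imp_seq_compact[OF \<open>compact K\<close>], of w] by blast
  have "d \<le> dist ((T ^^ n) (fst l)) ((T ^^ n) (snd l))" for n
  proof (rule tendsto_lowerbound)
    have "\<forall>j. (w \<circ> r) j \<in> X \<times> X" "l \<in> X \<times> X"
      using \<open>l \<in> K\<close> \<open>K \<subseteq> X \<times> X\<close> \<open>\<And>L. w L \<in> K\<close> by auto
    from continuous_on_tendsto_compose[OF continuous_on_dist_funpow[OF X(2,3)] lim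
        this(2) always_eventually[OF this(1)]]
    show "((\<lambda>j. dist ((T ^^ n) (fst (w (r j)))) ((T ^^ n) (snd (w (r j))))) \<longlongrightarrow>
        dist ((T ^^ n) (fst l)) ((T ^^ n) (snd l))) sequentially"
      by (simp add: o_def)
    have late: "d \<le> dist ((T ^^ n) (fst (w (r j)))) ((T ^^ n) (snd (w (r j))))" if "n < j" for j
    proof -
      have "n < r j" using that seq_suble[OF \<open>strict_mono r\<close>, of j] by simp
      then have "n + m (r j) \<in> {m (r j)..<m (r j) + r j}" by simp
      then have "d < dist ((T ^^ (n + m (r j))) x) ((T ^^ (n + m (r j))) y)"
        using block by blast
      then show ?thesis by (simp add: w_def funpow_add)
    qed
    show "eventually (\<lambda>j. d \<le> dist ((T ^^ n) (fst (w (r j)))) ((T ^^ n) (snd (w (r j)))))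
        sequentially"
      unfolding eventually_sequentially using late by (intro exI[of _ "Suc n"]) (auto simp: Suc_le_eq)
  qed simp
  then have "l \<in> separated_pairs X T d"
    using \<open>l \<in> K\<close> \<open>K \<subseteq> X \<times> X\<close> by (auto simp: separated_pairs_def)
  then show ?thesis
    using \<open>l \<in> K\<close> unfolding K_def by blast
qed

lemma factor_orbit_closure:
  assumes h: "continuous_on X h" "\<forall>x\<in>X. h (T x) = S (h x)"
    and X: "closed X" "T ` X \<subseteq> X" "x \<in> X" and u: "u \<in> closure (orbit T x)"
  shows "h u \<in> closure (orbit S (h x))"
proof -
  have "closure (orbit T x) \<subseteq> X"
    using X by (intro closure_minimal orbit_subset)
  moreover have "h ` orbit T x = orbit S (h x)"
    using factor_funpow[OF X(2) h(2) X(3)] by (simp add: orbit_def image_image)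
  ultimately have "h ` closure (orbit T x) \<subseteq> closure (orbit S (h x))"
    by (intro image_closure_subset continuous_on_subset[OF h(1)] closed_closure)
      (auto intro: closure_subset[THEN subsetD])
  then show ?thesis using u by blast
qed

lemma compact_factor_image_separated_pairs:
  assumes "factor_map X T Y S p"
  shows "compact (map_prod p p ` separated_pairs X T d)"
proof -
  have X: "compact X" "continuous_on X T" "T ` X \<subseteq> X" and p: "continuous_on X p"
    using assms by (auto simp: factor_map_def tds_def)
  have "separated_pairs X T d \<subseteq> X \<times> X"
    by (auto simp: separated_pairs_def)
  then show ?thesis
    using X by (intro compact_continuous_image compact_separated_pairs
        continuous_on_subset[OF continuous_on_map_prod[OF p p]])
qed

text \<open>The image of the separated pairs in Y \<times> Y is closed and invariant, and by distality the
  orbit closure of the image of a limit pair returns to (p x, p y).\<close>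
lemma thick_separation_factor_image:
  assumes factor: "factor_map X T Y S p" and "distal Y S" and "x \<in> X" "y \<in> X"
    and thick: "thick {n. d < dist ((T ^^ n) x) ((T ^^ n) y)}"
  shows "(p x, p y) \<in> map_prod p p ` separated_pairs X T d"
proof -
  have Y: "tds Y S" and p: "continuous_on X p" "p ` X = Y"
    and commute: "\<forall>x\<in>X. p (T x) = S (p x)"
    using factor by (auto simp: factor_map_def)
  have X: "compact X" "continuous_on X T" "T ` X \<subseteq> X"
    using factor by (auto simp: factor_map_def tds_def)
  define Q where "Q = map_prod p p ` separated_pairs X T d"
  interpret pairs: enveloping_semigroup "Y \<times> Y" "map_prod S S"
    using tds_map_prod[OF Y] by (rule enveloping_semigroup.intro)
  obtain w where w: "w \<in> separated_pairs X T d" "w \<in> closure (orbit (map_prod T T) (x, y))"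
    using thick_separation_orbit_closure[OF X \<open>x \<in> X\<close> \<open>y \<in> X\<close> thick] by blast
  have "map_prod p p w \<in> closure (orbit (map_prod S S) (map_prod p p (x, y)))"
  proof (rule factor_orbit_closure[OF continuous_on_map_prod[OF p(1) p(1)]])
    show "\<forall>v\<in>X \<times> X. map_prod p p (map_prod T T v) = map_prod S S (map_prod p p v)"
      using commute by auto
    show "closed (X \<times> X)"
      using X(1) by (intro closed_Times compact_imp_closed)
    show "map_prod T T ` (X \<times> X) \<subseteq> X \<times> X"
      using X(3) by auto
  qed (use \<open>x \<in> X\<close> \<open>y \<in> X\<close> w(2) in auto)
  moreover have "(p x, p y) \<in> Y \<times> Y"
    using p(2) \<open>x \<in> X\<close> \<open>y \<in> X\<close> by auto
  ultimately have "(p x, p y) \<in> closure (orbit (map_prod S S) (map_prod p p w))"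
    using pairs.distal_orbit_closure_sym[OF distal_map_prod[OF \<open>distal Y S\<close>]] by simp
  moreover have "closure (orbit (map_prod S S) (map_prod p p w)) \<subseteq> Q"
  proof (intro closure_minimal orbit_subset)
    show "map_prod S S ` Q \<subseteq> Q"
    proof
      fix v assume "v \<in> map_prod S S ` Q"
      then obtain a b where ab: "(a, b) \<in> separated_pairs X T d" "v = (S (p a), S (p b))"
        by (auto simp: Q_def)
      then have "v = map_prod p p (T a, T b)"
        using commute by (auto simp: separated_pairs_def)
      then show "v \<in> Q"
        using separated_pairs_invariant[OF X(3) ab(1)] unfolding Q_def by blast
    qed
    show "map_prod p p w \<in> Q" using w(1) by (simp add: Q_def)
    show "closed Q"
      unfolding Q_def using factor by (intro compact_imp_closed compact_factor_image_separated_pairs)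
  qed
  ultimately show ?thesis by (auto simp: Q_def)
qed

lemma diagonal_in_closed_pair_image:
  fixes p :: "'a::metric_space \<Rightarrow> 'b::metric_space"
  assumes "closed Q" "continuous_on X p" "z \<in> X"
    and dense: "\<And>U. openin (top_of_set X) U \<Longrightarrow> U \<noteq> {} \<Longrightarrow> \<exists>x\<in>U. \<exists>y\<in>U. (p x, p y) \<in> Q"
  shows "(p z, p z) \<in> Q"
  unfolding closed_approachable[OF \<open>closed Q\<close>, symmetric]
proof (intro allI impI)
  fix e :: real assume "e > 0"
  then have "e/2 > 0" by simp
  then obtain \<delta> where "\<delta> > 0" and \<delta>: "\<And>x. x \<in> X \<Longrightarrow> dist x z < \<delta> \<Longrightarrow> dist (p x) (p z) < e/2"
    using assms(2,3) unfolding continuous_on_iff by blast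
  have "openin (top_of_set X) (X \<inter> ball z \<delta>)" "X \<inter> ball z \<delta> \<noteq> {}"
    using \<open>\<delta> > 0\<close> \<open>z \<in> X\<close> by auto
  then obtain x y where "x \<in> X \<inter> ball z \<delta>" "y \<in> X \<inter> ball z \<delta>" and "(p x, p y) \<in> Q"
    using dense by blast
  then have "dist (p x) (p z) < e/2" "dist (p y) (p z) < e/2"
    using \<delta> by (auto simp: dist_commute)
  moreover have "dist (p x, p y) (p z, p z) \<le> dist (p x) (p z) + dist (p y) (p z)"
    unfolding dist_Pair_Pair by (intro sqrt_sum_squares_le_sum) auto
  ultimately show "\<exists>w\<in>Q. dist w (p z, p z) < e"
    using \<open>(p x, p y) \<in> Q\<close> by (intro bexI[of _ "(p x, p y)"]) auto
qed

lemma separated_not_proximal: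
  assumes "(x, y) \<in> separated_pairs X T d" "d > 0"
  shows "\<not> proximal_pair T x y"
proof
  assume "proximal_pair T x y"
  then obtain n where "dist ((T ^^ n) x) ((T ^^ n) y) < d"
    using assms(2) by (auto simp: proximal_pair_iff)
  moreover have "d \<le> dist ((T ^^ n) x) ((T ^^ n) y)"
    using assms(1) by (simp add: separated_pairs_def)
  ultimately show False by simp
qed

lemma strongly_sensitive_separated_fibre_pair:
  assumes factor: "factor_map X T Y S p" and "distal Y S" and "z \<in> X"
    and sensitive: "\<And>U. openin (top_of_set X) U \<Longrightarrow> U \<noteq> {} \<Longrightarrow>
      \<exists>x\<in>U. \<exists>y\<in>U. thick {n. d < dist ((T ^^ n) x) ((T ^^ n) y)}"
  shows "\<exists>x y. (x, y) \<in> separated_pairs X T d \<and> p x = p z \<and> p y = p z"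
proof -
  define Q where "Q = map_prod p p ` separated_pairs X T d"
  have "closed Q"
    unfolding Q_def using factor by (intro compact_imp_closed compact_factor_image_separated_pairs)
  moreover have "\<exists>x\<in>U. \<exists>y\<in>U. (p x, p y) \<in> Q" if U: "openin (top_of_set X) U" "U \<noteq> {}" for U
  proof -
    obtain x y where "x \<in> U" "y \<in> U" and thick: "thick {n. d < dist ((T ^^ n) x) ((T ^^ n) y)}"
      using sensitive[OF U] by blast
    moreover have "x \<in> X" "y \<in> X"
      using openin_subset[OF U(1)] \<open>x \<in> U\<close> \<open>y \<in> U\<close> by auto
    then have "(p x, p y) \<in> Q"
      unfolding Q_def by (rule thick_separation_factor_image[OF factor \<open>distal Y S\<close> _ _ thick])
    ultimately show ?thesis by blast
  qed
  ultimately have "(p z, p z) \<in> Q"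
    using factor \<open>z \<in> X\<close> by (intro diagonal_in_closed_pair_image) (auto simp: factor_map_def)
  then obtain w where "w \<in> separated_pairs X T d" "map_prod p p w = (p z, p z)"
    unfolding Q_def by (metis imageE)
  then show ?thesis by (cases w) auto
qed

theorem proposition5p2:
  fixes X :: "'a::metric_space set" and T :: "'a \<Rightarrow> 'a"
    and Y :: "'b::metric_space set" and S :: "'b \<Rightarrow> 'b" and p :: "'a \<Rightarrow> 'b"
  assumes "tds X T" and "minimal X T"
    and "max_distal_factor X T Y S p"
    and "proximal_factor X T p"
  shows "\<not> strongly_Ft_sensitive X T"
proof
  assume "strongly_Ft_sensitive X T"
  then obtain d :: real where "d > 0" and sensitive: "\<And>U. openin (top_of_set X) U \<Longrightarrow> U \<noteq> {} \<Longrightarrow>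
      \<exists>x\<in>U. \<exists>y\<in>U. thick {n. d < dist ((T ^^ n) x) ((T ^^ n) y)}"
    unfolding strongly_Ft_sensitive_def by blast
  have factor: "factor_map X T Y S p" and "distal Y S"
    using assms(3) by (auto simp: max_distal_factor_def)
  obtain z where "z \<in> X"
    using assms(1) by (auto simp: tds_def)
  then obtain x y where "(x, y) \<in> separated_pairs X T d" "p x = p z" "p y = p z"
    using strongly_sensitive_separated_fibre_pair[OF factor \<open>distal Y S\<close> _ sensitive] by blast
  moreover from this have "proximal_pair T x y"
    using assms(4) by (auto simp: proximal_factor_def separated_pairs_def)
  ultimately show False
    using separated_not_proximal \<open>d > 0\<close> by blast
qed

end
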